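(* Define $f_1:\mathrm{Aut}_*(H)\to k^{\mathbb{Z}}$ by $f_1(\phi)=(\beta_n)_{n\in\mathbb{Z}}$, where $\phi(x^ny)=x^ny+\beta_n(x^{n+1}-x^n)$ for all $n\in\mathbb{Z}$. Then $f_1$ is a group epimorphism onto the additive group $k^{\mathbb{Z}}$ with kernel $\mathrm{Aut}_1(H)$; that is, $1\to\mathrm{Aut}_1(H)\hookrightarrow\mathrm{Aut}_*(H)\xrightarrow{f_1}k^{\mathbb{Z}}\to0$ is an exact sequence of groups.
   Context: Let $k$ be a field and $0\neq q\in k$ not a root of unity. $H=k_q[x,x^{-1},y]$ is the $k$-algebra generated by $x,x^{-1},y$ with $xx^{-1}=x^{-1}x=1$, $yx=qxy$, a Hopf algebra with $\Delta(x)=x\otimes x$, $\Delta(y)=y\otimes x+1\otimes y$, $\varepsilon(x)=1$, $\varepsilon(y)=0$; $\{x^ny^m:n\in\mathbb{Z},m\in\mathbb{N}\}$ is a $k$-basis. $k^{\mathbb{Z}}$ is the group of sequences in $k$ under componentwise addition. $\mathrm{Aut}_c(H)$ is the group under composition of coalgebra automorphisms of $H$; $\mathrm{Aut}_*(H)$ is the set of $\phi\in\mathrm{Aut}_c(H)$ with $\phi(x^n)=x^n$ for all $n$ such that for each $n$ there is (a necessarily unique) $\beta_n\in k$ with $\phi(x^ny)=x^ny+\beta_n(x^{n+1}-x^n)$. Let $H_0=\mathrm{span}\{x^n\}$, $H(m)=H_0y^m$, and $\mathrm{Aut}_1(H)=\{\phi\in\mathrm{Aut}_c(H):\phi(h)=h\text{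 for all }h\in H(0)+H(1)\}$. *)

theory Defs
  imports "HOL-Algebra.Coset" "HOL-Library.FuncSet"
begin

text \<open>The Hopf algebra H = k_q[x,x^-1,y] with basis x^n y^m, (n,m) in Z x N.
  An element of H (x) H is a finitely supported coefficient function on pairs
  of basis indices (basis x^a y^b (x) x^c y^d).\<close>

type_synonym idx = "int \<times> nat"
type_synonym 'a hq = "idx \<Rightarrow> 'a"
type_synonym 'a hq2 = "idx \<times> idx \<Rightarrow> 'a"

definition supp :: "('b \<Rightarrow> 'a::zero) \<Rightarrow> 'b set" where
  "supp f = {b. f b \<noteq> 0}"

definition Hc :: "('a::field) hq set" where
  "Hc = {h. finite (supp h)}"

definition T2 :: "('a::field) hq2 set" where
  "T2 = {t. finite (supp t)}"

definition bas :: "idx \<Rightarrow> ('a::field) hq" where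
  "bas b = (\<lambda>c. if c = b then 1 else 0)"

definition hadd :: "('b \<Rightarrow> 'a::field) \<Rightarrow> ('b \<Rightarrow> 'a) \<Rightarrow> 'b \<Rightarrow> 'a" where
  "hadd u v = (\<lambda>c. u c + v c)"

definition hsub :: "('b \<Rightarrow> 'a::field) \<Rightarrow> ('b \<Rightarrow> 'a) \<Rightarrow> 'b \<Rightarrow> 'a" where
  "hsub u v = (\<lambda>c. u c - v c)"

definition hscale :: "'a::field \<Rightarrow> ('b \<Rightarrow> 'a) \<Rightarrow> 'b \<Rightarrow> 'a" where
  "hscale s u = (\<lambda>c. s * u c)"

definition tens :: "('a::field) hq \<Rightarrow> 'a hq \<Rightarrow> 'a hq2" where
  "tens u v = (\<lambda>(b, c). u b * v c)"

text \<open>Multiplication of basis elements of H (x) H using yx = qxy in each factor: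
  (x^a1 y^b1 (x) x^c1 y^d1)(x^a2 y^b2 (x) x^c2 y^d2)
    = q^(b1 a2 + d1 c2) x^(a1+a2) y^(b1+b2) (x) x^(c1+c2) y^(d1+d2).\<close>
definition tmono_idx :: "idx \<times> idx \<Rightarrow> idx \<times> idx \<Rightarrow> idx \<times> idx" where
  "tmono_idx s t = (case s of ((a1, b1), (c1, d1)) \<Rightarrow> case t of ((a2, b2), (c2, d2)) \<Rightarrow>
      ((a1 + a2, b1 + b2), (c1 + c2, d1 + d2)))"

definition tmono_coef :: "'a::field \<Rightarrow> idx \<times> idx \<Rightarrow> idx \<times> idx \<Rightarrow> 'a" where
  "tmono_coef q s t = (case s of ((a1, b1), (c1, d1)) \<Rightarrow> case t of ((a2, b2), (c2, d2)) \<Rightarrow>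
      q powi (int b1 * a2 + int d1 * c2))"

definition tmul :: "'a::field \<Rightarrow> 'a hq2 \<Rightarrow> 'a hq2 \<Rightarrow> 'a hq2" where
  "tmul q s t = (\<lambda>p. \<Sum>(a, b) \<in> supp s \<times> supp t.
      if tmono_idx a b = p then s a * t b * tmono_coef q a b else 0)"

primrec tpow :: "'a::field \<Rightarrow> 'a hq2 \<Rightarrow> nat \<Rightarrow> 'a hq2" where
  "tpow q t 0 = tens (bas (0, 0)) (bas (0, 0))"
| "tpow q t (Suc m) = tmul q (tpow q t m) t"

definition Delta_y :: "('a::field) hq2" where
  "Delta_y = hadd (tens (bas (0, 1)) (bas (1, 0))) (tens (bas (0, 0)) (bas (0, 1)))"

text \<open>Delta(x^n y^m) = Delta(x)^n Delta(y)^m, with Delta(x^n) = x^n (x) x^n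
  (Delta is an algebra map with Delta(x) = x (x) x, hence Delta(x^-1) = x^-1 (x) x^-1).\<close>
definition Delta_bas :: "'a::field \<Rightarrow> idx \<Rightarrow> 'a hq2" where
  "Delta_bas q b = (case b of (n, m) \<Rightarrow>
      tmul q (tens (bas (n, 0)) (bas (n, 0))) (tpow q Delta_y m))"

definition Delta :: "'a::field \<Rightarrow> 'a hq \<Rightarrow> 'a hq2" where
  "Delta q h = (\<lambda>p. \<Sum>b \<in> supp h. h b * Delta_bas q b p)"

definition eps :: "('a::field) hq \<Rightarrow> 'a" where
  "eps h = (\<Sum>n \<in> {n. h (n, 0) \<noteq> 0}. h (n, 0))"

definition tmap :: "('a::field hq \<Rightarrow> 'a hq) \<Rightarrow> ('a hq \<Rightarrow> 'a hq) \<Rightarrow> 'a hq2 \<Rightarrow> 'a hq2" where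
  "tmap \<phi> \<psi> t = (\<lambda>p. \<Sum>(b, c) \<in> supp t. t (b, c) * tens (\<phi> (bas b)) (\<psi> (bas c)) p)"

definition linear_H :: "('a::field hq \<Rightarrow> 'a hq) \<Rightarrow> bool" where
  "linear_H \<phi> \<longleftrightarrow> (\<forall>u\<in>Hc. \<forall>v\<in>Hc. \<phi> (hadd u v) = hadd (\<phi> u) (\<phi> v))
                   \<and> (\<forall>s. \<forall>u\<in>Hc. \<phi> (hscale s u) = hscale s (\<phi> u))"

text \<open>Maps are taken extensional (undefined outside H) so that
  they are determined by their action on H, as in HOL-Algebra's BijGroup.\<close>
definition Aut_c :: "'a::field \<Rightarrow> ('a hq \<Rightarrow> 'a hq) set" where
  "Aut_c q = {\<phi>. \<phi> \<in> extensional Hc \<and> bij_betw \<phi> Hc Hc \<and> linear_H \<phi>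
      \<and> (\<forall>h\<in>Hc. Delta q (\<phi> h) = tmap \<phi> \<phi> (Delta q h))
      \<and> (\<forall>h\<in>Hc. eps (\<phi> h) = eps h)}"

definition AutcGroup :: "'a::field \<Rightarrow> ('a hq \<Rightarrow> 'a hq) monoid" where
  "AutcGroup q = \<lparr>carrier = Aut_c q,
      mult = (\<lambda>\<phi> \<psi>. compose Hc \<phi> \<psi>),
      one = (\<lambda>h\<in>Hc. h)\<rparr>"

definition Aut_star :: "'a::field \<Rightarrow> ('a hq \<Rightarrow> 'a hq) set" where
  "Aut_star q = {\<phi> \<in> Aut_c q. (\<forall>n. \<phi> (bas (n, 0)) = bas (n, 0))
      \<and> (\<forall>n. \<exists>\<beta>. \<phi> (bas (n, 1)) =
             hadd (bas (n, 1)) (hscale \<beta> (hsub (bas (n + 1, 0)) (bas (n, 0)))))}"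

text \<open>H(0) + H(1) = span of x^n and x^n y\<close>
definition H01 :: "('a::field) hq set" where
  "H01 = {h \<in> Hc. \<forall>n m. 2 \<le> m \<longrightarrow> h (n, m) = 0}"

definition Aut_1 :: "'a::field \<Rightarrow> ('a hq \<Rightarrow> 'a hq) set" where
  "Aut_1 q = {\<phi> \<in> Aut_c q. \<forall>h\<in>H01. \<phi> h = h}"

definition f1 :: "('a::field hq \<Rightarrow> 'a hq) \<Rightarrow> int \<Rightarrow> 'a" where
  "f1 \<phi> = (\<lambda>n. THE \<beta>. \<phi> (bas (n, 1)) =
             hadd (bas (n, 1)) (hscale \<beta> (hsub (bas (n + 1, 0)) (bas (n, 0)))))"

definition SeqGroup :: "(int \<Rightarrow> 'a::field) monoid" where
  "SeqGroup = \<lparr>carrier = UNIV, mult = (\<lambda>\<alpha> \<beta> n. \<alpha> n + \<beta> n), one = (\<lambda>n. 0)\<rparr>"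

end

theory Submission
  imports Defs
begin

text \<open>In the divided powers \<open>e\<^sub>n\<^sub>,\<^sub>m = x\<^sup>n y\<^sup>m / [m]\<^sub>q!\<close>, which exist because \<open>q\<close> is not a
  root of unity, the comultiplication reads \<open>\<Delta> e\<^sub>n\<^sub>,\<^sub>m = \<Sum>\<^sub>i e\<^sub>n\<^sub>,\<^sub>i \<otimes> e\<^sub>n\<^sub>+\<^sub>i\<^sub>,\<^sub>m\<^sub>-\<^sub>i\<close>: \<open>H\<close> is the
  incidence coalgebra of \<open>(\<int>, \<le>)\<close>, with \<open>e\<^sub>n\<^sub>,\<^sub>m\<close> the interval \<open>[n, n + m]\<close>. Hence every pair
  \<open>X, Y\<close> of mutually inverse upper triangular \<open>\<int> \<times> \<int>\<close> matrices gives a coalgebra automorphism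
  \<open>[s, e] \<mapsto> \<Sum> X s s' * Y e' e * [s', e']\<close>. For \<open>Y = 1 - \<beta> S\<close> (\<open>S\<close> the shift) it fixes every
  \<open>x\<^sup>n\<close> and sends \<open>x\<^sup>n y\<close> to \<open>x\<^sup>n y + \<beta>\<^sub>n (x\<^sup>n\<^sup>+\<^sup>1 - x\<^sup>n)\<close>, so \<open>f\<^sub>1\<close> is onto. The rest is formal:
  elements of \<open>Aut\<^sub>*(H)\<close> fix \<open>x\<^sup>n\<^sup>+\<^sup>1 - x\<^sup>n\<close>, so the \<open>\<beta>\<close>'s add up under composition, and
  \<open>\<beta> = 0\<close> means fixing the basis of \<open>H(0) + H(1)\<close>.\<close>

lemma supp_bas [simp]: "supp (bas b :: 'a::field hq) = {b}"
  by (auto simp: supp_def bas_def)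

lemma bas_Hc [simp]: "(bas b :: 'a::field hq) \<in> Hc"
  by (simp add: Hc_def)

lemma finite_supp_Hc: "h \<in> Hc \<Longrightarrow> finite (supp h)"
  by (simp add: Hc_def)

lemma hadd_Hc:
  assumes "u \<in> Hc" "v \<in> Hc" shows "hadd u v \<in> Hc"
proof -
  have "supp (hadd u v) \<subseteq> supp u \<union> supp v" by (auto simp: supp_def hadd_def)
  with assms show ?thesis by (auto simp: Hc_def intro: finite_subset)
qed

lemma hsub_Hc:
  assumes "u \<in> Hc" "v \<in> Hc" shows "hsub u v \<in> Hc"
proof -
  have "supp (hsub u v) \<subseteq> supp u \<union> supp v" by (auto simp: supp_def hsub_def)
  with assms show ?thesis by (auto simp: Hc_def intro: finite_subset)
qed

lemma hscale_Hc:
  assumes "u \<in> Hc" shows "hscale s u \<in> Hc"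
proof -
  have "supp (hscale s u) \<subseteq> supp u" by (auto simp: supp_def hscale_def)
  with assms show ?thesis by (auto simp: Hc_def intro: finite_subset)
qed

definition lcomb :: "('b \<Rightarrow> 'a::field) \<Rightarrow> ('b \<Rightarrow> 'a) \<Rightarrow> 'a" where
  "lcomb h c = (\<Sum>b\<in>supp h. h b * c b)"

lemma lcomb_superset:
  assumes "finite S" "supp h \<subseteq> S"
  shows "lcomb h c = (\<Sum>b\<in>S. h b * c b)"
  unfolding lcomb_def by (rule sum.mono_neutral_left) (use assms in \<open>auto simp: supp_def\<close>)

lemma lcomb_delta:
  assumes "finite (supp h)"
  shows "lcomb h (\<lambda>b. if b = p then v else 0) = h p * v"
proof -
  have "lcomb h (\<lambda>b. if b = p then v else 0) = (\<Sum>b\<in>supp h. if b = p then h b * v else 0)"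
    unfolding lcomb_def by (rule sum.cong) auto
  then show ?thesis using assms by (simp add: sum.delta') (simp add: supp_def)
qed

lemma lcomb_hadd:
  assumes "finite (supp u)" "finite (supp v)"
  shows "lcomb (hadd u v) c = lcomb u c + lcomb v c"
proof -
  have S: "finite (supp u \<union> supp v)" using assms by simp
  have "supp (hadd u v) \<subseteq> supp u \<union> supp v" by (auto simp: supp_def hadd_def)
  then show ?thesis
    by (simp add: lcomb_superset[OF S] hadd_def sum.distrib distrib_right)
qed

lemma lcomb_hscale:
  assumes "finite (supp u)"
  shows "lcomb (hscale s u) c = s * lcomb u c"
proof -
  have "supp (hscale s u) \<subseteq> supp u" by (auto simp: supp_def hscale_def)
  then show ?thesis
    by (simp add: lcomb_superset[OF assms] hscale_def sum_distrib_left mult.assoc)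
qed

lemma supp_sum_subset:
  fixes f :: "'c \<Rightarrow> 'b \<Rightarrow> 'a::field"
  shows "supp (\<lambda>p. \<Sum>b\<in>B. a b * f b p) \<subseteq> (\<Union>b\<in>B. supp (f b))"
proof
  fix p assume "p \<in> supp (\<lambda>p. \<Sum>b\<in>B. a b * f b p)"
  then obtain b where "b \<in> B" "a b * f b p \<noteq> 0"
    unfolding supp_def mem_Collect_eq by (meson sum.not_neutral_contains_not_neutral)
  then show "p \<in> (\<Union>b\<in>B. supp (f b))" by (auto simp: supp_def)
qed

lemma finite_supp_sum:
  fixes f :: "'c \<Rightarrow> 'b \<Rightarrow> 'a::field"
  assumes "finite B" "\<And>b. b \<in> B \<Longrightarrow> finite (supp (f b))"
  shows "finite (supp (\<lambda>p. \<Sum>b\<in>B. a b * f b p))"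
  using assms by (intro finite_subset[OF supp_sum_subset]) blast

lemma lcomb_sum:
  fixes f :: "'c \<Rightarrow> 'b \<Rightarrow> 'a::field"
  assumes B: "finite B" and f: "\<And>b. b \<in> B \<Longrightarrow> finite (supp (f b))"
  shows "lcomb (\<lambda>p. \<Sum>b\<in>B. a b * f b p) c = (\<Sum>b\<in>B. a b * lcomb (f b) c)"
proof -
  define S where "S = (\<Union>b\<in>B. supp (f b))"
  have S: "finite S" using B f by (simp add: S_def)
  have "lcomb (\<lambda>p. \<Sum>b\<in>B. a b * f b p) c = (\<Sum>x\<in>S. (\<Sum>b\<in>B. a b * f b x) * c x)"
    by (rule lcomb_superset[OF S]) (use supp_sum_subset[of a f B] in \<open>simp add: S_def\<close>)
  also have "\<dots> = (\<Sum>b\<in>B. a b * (\<Sum>x\<in>S. f b x * c x))"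
    by (simp add: sum_distrib_right sum_distrib_left mult.assoc sum.swap[of _ S])
  also have "\<dots> = (\<Sum>b\<in>B. a b * lcomb (f b) c)"
    by (intro sum.cong refl arg_cong[where f="(*) _"] lcomb_superset[OF S, symmetric])
       (auto simp: S_def)
  finally show ?thesis .
qed

lemma supp_tens: "supp (tens u v) = supp u \<times> supp (v :: 'a::field hq)"
  by (auto simp: supp_def tens_def)

lemma lcomb_tens:
  assumes "finite (supp u)" "finite (supp v)"
  shows "lcomb (tens u v) (\<lambda>x. c (fst x) * d (snd x)) = lcomb u c * lcomb v d"
  unfolding lcomb_def supp_tens sum_product sum.cartesian_product
  by (rule sum.cong) (auto simp: tens_def mult_ac)

lemma linear_H_hadd: "linear_H \<phi> \<Longrightarrow> u \<in> Hc \<Longrightarrow> v \<in> Hc \<Longrightarrow> \<phi> (hadd u v) = hadd (\<phi> u) (\<phi> v)"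
  unfolding linear_H_def by blast

lemma linear_H_hscale: "linear_H \<phi> \<Longrightarrow> u \<in> Hc \<Longrightarrow> \<phi> (hscale s u) = hscale s (\<phi> u)"
  unfolding linear_H_def by blast

lemma linear_H_hsub:
  assumes \<phi>: "linear_H \<phi>" and u: "u \<in> Hc" and v: "v \<in> Hc"
  shows "\<phi> (hsub u v) = hsub (\<phi> u) (\<phi> v)"
proof -
  have "hsub u v = hadd u (hscale (-1) v)" by (simp add: hsub_def hadd_def hscale_def)
  then have "\<phi> (hsub u v) = hadd (\<phi> u) (hscale (-1) (\<phi> v))"
    using linear_H_hadd[OF \<phi> u hscale_Hc[OF v]] linear_H_hscale[OF \<phi> v] by simp
  thus ?thesis by (simp add: hsub_def hadd_def hscale_def)
qed

lemma linear_H_expand: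
  assumes \<phi>: "linear_H \<phi>" and h: "h \<in> Hc"
  shows "\<phi> h p = lcomb h (\<lambda>b. \<phi> (bas b) p)"
proof -
  have "\<phi> h = (\<lambda>p. \<Sum>b\<in>S. h b * \<phi> (bas b) p)" if "finite S" "supp h \<subseteq> S" for h S
    using that
  proof (induction S arbitrary: h rule: finite_induct)
    case empty
    then have "h = hscale 0 (bas (0, 0))" by (auto simp: supp_def hscale_def)
    then have "\<phi> h = hscale 0 (\<phi> (bas (0, 0)))" using linear_H_hscale[OF \<phi> bas_Hc] by simp
    then show ?case by (simp add: hscale_def)
  next
    case (insert x S)
    define h' where "h' = h(x := 0)"
    have h': "supp h' \<subseteq> S" "h' \<in> Hc"
      using insert by (auto simp: supp_def h'_def Hc_def intro: finite_subset)
    have "h = hadd h' (hscale (h x) (bas x))"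
      by (auto simp: h'_def hadd_def hscale_def bas_def)
    then have "\<phi> h = hadd (\<phi> h') (hscale (h x) (\<phi> (bas x)))"
      using linear_H_hadd[OF \<phi> h'(2) hscale_Hc[OF bas_Hc]] linear_H_hscale[OF \<phi> bas_Hc] by metis
    moreover have "\<phi> h' = (\<lambda>p. \<Sum>b\<in>S. h b * \<phi> (bas b) p)"
      unfolding insert.IH[OF h'(1)] using insert.hyps(2) by (intro ext sum.cong) (auto simp: h'_def)
    ultimately show ?case
      using insert.hyps by (simp add: fun_eq_iff hadd_def hscale_def add.commute)
  qed
  with h show ?thesis by (simp add: lcomb_def Hc_def)
qed

lemma linear_H_inverse:
  fixes \<phi> \<psi> :: "'a::field hq \<Rightarrow> 'a hq"
  assumes \<phi>: "linear_H \<phi>" and \<psi>_Hc: "\<And>h. h \<in> Hc \<Longrightarrow> \<psi> h \<in> Hc"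
    and \<phi>\<psi>: "\<And>h. h \<in> Hc \<Longrightarrow> \<phi> (\<psi> h) = h" and \<psi>\<phi>: "\<And>h. h \<in> Hc \<Longrightarrow> \<psi> (\<phi> h) = h"
  shows "linear_H \<psi>"
  unfolding linear_H_def
proof (intro conjI ballI allI)
  fix u v :: "'a hq" assume u: "u \<in> Hc" and v: "v \<in> Hc"
  have "\<psi> (hadd u v) = \<psi> (\<phi> (hadd (\<psi> u) (\<psi> v)))"
    using linear_H_hadd[OF \<phi> \<psi>_Hc[OF u] \<psi>_Hc[OF v]] \<phi>\<psi> u v by simp
  also have "\<dots> = hadd (\<psi> u) (\<psi> v)" by (rule \<psi>\<phi>[OF hadd_Hc[OF \<psi>_Hc[OF u] \<psi>_Hc[OF v]]])
  finally show "\<psi> (hadd u v) = hadd (\<psi> u) (\<psi> v)" .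
next
  fix s :: 'a and u :: "'a hq" assume u: "u \<in> Hc"
  have "\<psi> (hscale s u) = \<psi> (\<phi> (hscale s (\<psi> u)))"
    using linear_H_hscale[OF \<phi> \<psi>_Hc[OF u]] \<phi>\<psi> u by simp
  also have "\<dots> = hscale s (\<psi> u)" by (rule \<psi>\<phi>[OF hscale_Hc[OF \<psi>_Hc[OF u]]])
  finally show "\<psi> (hscale s u) = hscale s (\<psi> u)" .
qed

lemma linear_H_sum:
  assumes \<phi>: "linear_H \<phi>" and B: "finite B" and f: "\<And>b. b \<in> B \<Longrightarrow> f b \<in> Hc"
  shows "\<phi> (\<lambda>p. \<Sum>b\<in>B. a b * f b p) p = (\<Sum>b\<in>B. a b * \<phi> (f b) p)"
proof -
  have "(\<lambda>p. \<Sum>b\<in>B. a b * f b p) \<in> Hc"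
    using finite_supp_sum[OF B, of f a] f by (auto simp: Hc_def)
  then have "\<phi> (\<lambda>p. \<Sum>b\<in>B. a b * f b p) p = (\<Sum>b\<in>B. a b * lcomb (f b) (\<lambda>x. \<phi> (bas x) p))"
    using f by (subst linear_H_expand[OF \<phi>]) (simp_all add: lcomb_sum[OF B] Hc_def)
  also have "\<dots> = (\<Sum>b\<in>B. a b * \<phi> (f b) p)"
    using f by (simp add: linear_H_expand[OF \<phi>, symmetric])
  finally show ?thesis .
qed

lemma linear_H_fixes:
  assumes "linear_H \<phi>" "h \<in> Hc" "\<And>b. b \<in> supp h \<Longrightarrow> \<phi> (bas b) = bas b"
  shows "\<phi> h = h"
proof
  fix p
  have "\<phi> h p = lcomb h (\<lambda>b. \<phi> (bas b) p)"
    by (rule linear_H_expand[OF assms(1,2)])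
  also have "\<dots> = lcomb h (\<lambda>b. bas b p)"
    using assms(3) by (simp add: lcomb_def)
  also have "(\<lambda>b. bas b p) = (\<lambda>b. if b = p then 1 else 0)"
    by (auto simp: bas_def)
  finally show "\<phi> h p = h p"
    using assms(2) by (simp add: lcomb_delta Hc_def)
qed

lemma tmap_eq_lcomb: "tmap \<phi> \<psi> t P = lcomb t (\<lambda>x. \<phi> (bas (fst x)) (fst P) * \<psi> (bas (snd x)) (snd P))"
  by (simp add: tmap_def tens_def lcomb_def case_prod_beta mult.assoc)

lemma tmap_cong:
  "(\<And>b. \<phi> (bas b) = \<phi>' (bas b)) \<Longrightarrow> (\<And>b. \<psi> (bas b) = \<psi>' (bas b)) \<Longrightarrow> tmap \<phi> \<psi> = tmap \<phi>' \<psi>'"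
  unfolding tmap_def by simp

lemma tmap_tens:
  assumes "linear_H \<phi>" "linear_H \<psi>" "u \<in> Hc" "v \<in> Hc"
  shows "tmap \<phi> \<psi> (tens u v) = tens (\<phi> u) (\<psi> v)"
proof
  fix P :: "idx \<times> idx"
  have "tmap \<phi> \<psi> (tens u v) P = lcomb u (\<lambda>b. \<phi> (bas b) (fst P)) * lcomb v (\<lambda>b. \<psi> (bas b) (snd P))"
    using assms(3,4) lcomb_tens[of u v "\<lambda>b. \<phi> (bas b) (fst P)" "\<lambda>b. \<psi> (bas b) (snd P)"]
    by (simp add: tmap_eq_lcomb Hc_def)
  also have "\<dots> = tens (\<phi> u) (\<psi> v) P"
    using assms by (simp add: linear_H_expand[symmetric] tens_def case_prod_beta)
  finally show "tmap \<phi> \<psi> (tens u v) P = tens (\<phi> u) (\<psi> v) P" .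
qed

lemma tmap_sum:
  assumes "finite B" "\<And>b. b \<in> B \<Longrightarrow> f b \<in> T2"
  shows "tmap \<phi> \<psi> (\<lambda>x. \<Sum>b\<in>B. a b * f b x) P = (\<Sum>b\<in>B. a b * tmap \<phi> \<psi> (f b) P)"
  using assms by (simp add: tmap_eq_lcomb lcomb_sum T2_def)

lemma tmap_id:
  assumes "t \<in> T2"
  shows "tmap (\<lambda>h\<in>Hc. h) (\<lambda>h\<in>Hc. h) t = t"
proof
  fix P
  have "tmap (\<lambda>h\<in>Hc. h) (\<lambda>h\<in>Hc. h) t P = lcomb t (\<lambda>x. bas (fst x) (fst P) * bas (snd x) (snd P))"
    by (simp add: tmap_eq_lcomb)
  also have "(\<lambda>x. bas (fst x) (fst P) * bas (snd x) (snd P)) = (\<lambda>x. if x = P then 1 else 0)"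
    by (auto simp: fun_eq_iff bas_def prod_eq_iff)
  also have "lcomb t (\<lambda>x. if x = P then 1 else 0) = t P"
    using assms by (simp add: lcomb_delta T2_def)
  finally show "tmap (\<lambda>h\<in>Hc. h) (\<lambda>h\<in>Hc. h) t P = t P" .
qed

lemma tmap_tmap:
  assumes \<phi>: "linear_H \<phi>" "linear_H \<phi>'" and \<psi>: "\<And>b. \<psi> (bas b) \<in> Hc" "\<And>b. \<psi>' (bas b) \<in> Hc"
    and t: "t \<in> T2"
  shows "tmap \<phi> \<phi>' (tmap \<psi> \<psi>' t) = tmap (\<lambda>h. \<phi> (\<psi> h)) (\<lambda>h. \<phi>' (\<psi>' h)) t"
proof
  fix P
  have "tmap \<psi> \<psi>' t = (\<lambda>y. \<Sum>x\<in>supp t. t x * tens (\<psi> (bas (fst x))) (\<psi>' (bas (snd x))) y)"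
    by (simp add: fun_eq_iff tmap_def case_prod_beta)
  moreover have "tens (\<psi> (bas (fst x))) (\<psi>' (bas (snd x))) \<in> T2" for x
    using \<psi> by (simp add: T2_def Hc_def supp_tens)
  ultimately have "tmap \<phi> \<phi>' (tmap \<psi> \<psi>' t) P
      = (\<Sum>x\<in>supp t. t x * tens (\<phi> (\<psi> (bas (fst x)))) (\<phi>' (\<psi>' (bas (snd x)))) P)"
    using t \<psi> by (simp add: tmap_sum T2_def tmap_tens[OF \<phi>])
  then show "tmap \<phi> \<phi>' (tmap \<psi> \<psi>' t) P = tmap (\<lambda>h. \<phi> (\<psi> h)) (\<lambda>h. \<phi>' (\<psi>' h)) t P"
    by (simp add: tmap_def case_prod_beta)
qed

section \<open>Gaussian binomial coefficients\<close>

definition not_root_of_unity :: "'a::field \<Rightarrow> bool" where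
  "not_root_of_unity q \<longleftrightarrow> (\<forall>n::nat. n > 0 \<longrightarrow> q ^ n \<noteq> 1)"

definition qint :: "'a::field \<Rightarrow> nat \<Rightarrow> 'a" where
  "qint q k = (\<Sum>l<k. q ^ l)"

definition qfact :: "'a::field \<Rightarrow> nat \<Rightarrow> 'a" where
  "qfact q k = (\<Prod>j\<in>{1..k}. qint q j)"

definition qbinom :: "'a::field \<Rightarrow> nat \<Rightarrow> nat \<Rightarrow> 'a" where
  "qbinom q i j = qfact q (i + j) / (qfact q i * qfact q j)"

lemma qfact_0 [simp]: "qfact q 0 = 1"
  by (simp add: qfact_def)

lemma qfact_Suc: "qfact q (Suc k) = qfact q k * qint q (Suc k)"
  by (simp add: qfact_def prod.nat_ivl_Suc' mult.commute)

lemma qfact_Suc_0 [simp]: "qfact q (Suc 0) = 1"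
  by (simp add: qfact_def qint_def)

lemma qint_add: "qint q (a + b) = qint q a + q ^ a * qint q b"
  by (induction b) (simp_all add: qint_def power_add algebra_simps)

lemma qint_nonzero:
  assumes "not_root_of_unity q" "k > 0"
  shows "qint q k \<noteq> 0"
proof
  assume "qint q k = 0"
  then have "q ^ k = 1" using one_diff_power_eq[of q k] by (simp add: qint_def)
  with assms show False by (simp add: not_root_of_unity_def)
qed

lemma qfact_nonzero:
  assumes "not_root_of_unity q" shows "qfact q k \<noteq> 0"
  unfolding qfact_def using qint_nonzero[OF assms] by (auto simp: prod_zero_iff)

lemma qbinom_0_left [simp]: "not_root_of_unity q \<Longrightarrow> qbinom q 0 j = 1"
  by (simp add: qbinom_def qfact_nonzero)

lemma qbinom_0_right [simp]: "not_root_of_unity q \<Longrightarrow> qbinom q i 0 = 1"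
  by (simp add: qbinom_def qfact_nonzero)

lemma qbinom_Suc_Suc:
  assumes q: "not_root_of_unity q"
  shows "qbinom q (Suc i) (Suc j) = qbinom q i (Suc j) * q ^ Suc j + qbinom q (Suc i) j"
proof -
  have "qint q (Suc (Suc (i + j))) = qint q (Suc j) + q ^ Suc j * qint q (Suc i)"
    using qint_add[of q "Suc j" "Suc i"] by (simp add: add.commute)
  moreover have "qfact q i \<noteq> 0" "qfact q j \<noteq> 0" "qint q (Suc i) \<noteq> 0" "qint q (Suc j) \<noteq> 0"
    using q by (simp_all add: qfact_nonzero qint_nonzero)
  ultimately show ?thesis
    by (simp add: qbinom_def qfact_Suc field_simps)
qed

section \<open>The comultiplication on the basis\<close>

lemma tmul_superset:
  assumes "finite A" "supp s \<subseteq> A" "finite B" "supp t \<subseteq> B"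
  shows "tmul q s t p =
    (\<Sum>x\<in>A. \<Sum>y\<in>B. if tmono_idx x y = p then s x * t y * tmono_coef q x y else 0)"
proof -
  have "tmul q s t p = (\<Sum>z\<in>A \<times> B. if tmono_idx (fst z) (snd z) = p
      then s (fst z) * t (snd z) * tmono_coef q (fst z) (snd z) else 0)"
    unfolding tmul_def case_prod_beta
    by (rule sum.mono_neutral_left) (use assms in \<open>auto simp: supp_def\<close>)
  then show ?thesis by (simp add: sum.cartesian_product case_prod_beta)
qed

lemma finite_supp_tmul:
  assumes "finite (supp s)" "finite (supp t)"
  shows "finite (supp (tmul q s t))"
proof -
  have "supp (tmul q s t) \<subseteq> (\<lambda>(x, y). tmono_idx x y) ` (supp s \<times> supp t)"
  proof
    fix p assume "p \<in> supp (tmul q s t)"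
    then obtain z where "z \<in> supp s \<times> supp t"
      "(case z of (x, y) \<Rightarrow> if tmono_idx x y = p then s x * t y * tmono_coef q x y else 0) \<noteq> 0"
      unfolding supp_def tmul_def mem_Collect_eq by (meson sum.not_neutral_contains_not_neutral)
    then show "p \<in> (\<lambda>(x, y). tmono_idx x y) ` (supp s \<times> supp t)"
      by (auto split: if_splits prod.splits intro: rev_image_eqI)
  qed
  with assms show ?thesis by (auto intro: finite_subset)
qed

lemma Delta_y_apply:
  "Delta_y p = (if p = ((0, 1), (1, 0)) \<or> p = ((0, 0), (0, 1)) then 1 else 0)"
  by (auto simp: Delta_y_def hadd_def tens_def bas_def case_prod_beta prod_eq_iff)

lemma supp_Delta_y: "supp (Delta_y :: 'a::field hq2) = {((0, 1), (1, 0)), ((0, 0), (0, 1))}"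
  by (auto simp: supp_def Delta_y_apply)

lemma finite_supp_tpow: "finite (supp t) \<Longrightarrow> finite (supp (tpow q t m))"
  by (induction m) (simp_all add: supp_tens finite_supp_tmul)

lemma tmono_idx_apply [simp]:
  "tmono_idx ((a1, b1), (c1, d1)) ((a2, b2), (c2, d2)) = ((a1 + a2, b1 + b2), (c1 + c2, d1 + d2))"
  by (simp add: tmono_idx_def)

lemma tmono_coef_apply [simp]:
  "tmono_coef q ((a1, b1), (c1, d1)) ((a2, b2), (c2, d2)) = q powi (int b1 * a2 + int d1 * c2)"
  by (simp add: tmono_coef_def)

lemma tmul_Delta_y:
  assumes T: "finite (supp T)"
  shows "tmul q T Delta_y ((a, i), (c, j)) =
    (if 0 < i then T ((a, i - 1), (c - 1, j)) * q ^ j else 0) + (if 0 < j then T ((a, i), (c, j - 1)) else 0)"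
proof -
  let ?P = "((a, i), (c, j))" and ?y1 = "((0, 1), (1, 0)) :: idx \<times> idx" and ?y2 = "((0, 0), (0, 1)) :: idx \<times> idx"
  let ?t = "\<lambda>x y. if tmono_idx x y = ?P then T x * Delta_y y * tmono_coef q x y else 0"
  have t1: "?t x ?y1 = (if 0 < i then if x = ((a, i - 1), (c - 1, j)) then T x * q ^ j else 0 else 0)"
    and t2: "?t x ?y2 = (if 0 < j then if x = ((a, i), (c, j - 1)) then T x else 0 else 0)" for x
  proof -
    obtain a' i' c' j' where x: "x = ((a', i'), (c', j'))" by (metis prod.collapse)
    show "?t x ?y1 = (if 0 < i then if x = ((a, i - 1), (c - 1, j)) then T x * q ^ j else 0 else 0)"
      unfolding x by (auto simp: Delta_y_apply)
    show "?t x ?y2 = (if 0 < j then if x = ((a, i), (c, j - 1)) then T x else 0 else 0)"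
      unfolding x by (auto simp: Delta_y_apply)
  qed
  have "tmul q T Delta_y ?P = (\<Sum>x\<in>supp T. \<Sum>y\<in>{?y1, ?y2}. ?t x y)"
    using T by (intro tmul_superset) (simp_all add: supp_Delta_y)
  also have "\<dots> = (\<Sum>x\<in>supp T. ?t x ?y1 + ?t x ?y2)"
    by (intro sum.cong refl) simp
  also have "\<dots> = (\<Sum>x\<in>supp T. ?t x ?y1) + (\<Sum>x\<in>supp T. ?t x ?y2)"
    by (rule sum.distrib)
  finally show ?thesis
    unfolding t1 t2 using T by (simp add: sum.delta') (simp add: supp_def)
qed

lemma tmul_Delta_xpow_left:
  assumes T: "finite (supp T)"
  shows "tmul q (tens (bas (n, 0)) (bas (n, 0))) T ((a, i), (c, j)) = T ((a - n, i), (c - n, j))"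
proof -
  let ?x = "((n, 0), (n, 0)) :: idx \<times> idx" and ?P = "((a, i), (c, j))"
  have "tmul q (tens (bas (n, 0)) (bas (n, 0))) T ?P =
      (\<Sum>y\<in>supp T. if tmono_idx ?x y = ?P then tens (bas (n, 0)) (bas (n, 0)) ?x * T y * tmono_coef q ?x y else 0)"
    using T by (subst tmul_superset[where A = "{?x}"]) (simp_all add: supp_tens)
  also have "\<dots> = (\<Sum>y\<in>supp T. if y = ((a - n, i), (c - n, j)) then T y else 0)"
  proof (intro sum.cong refl)
    fix y :: "idx \<times> idx"
    obtain a' i' c' j' where y: "y = ((a', i'), (c', j'))" by (metis prod.collapse)
    show "(if tmono_idx ?x y = ?P then tens (bas (n, 0)) (bas (n, 0)) ?x * T y * tmono_coef q ?x y else 0) =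
        (if y = ((a - n, i), (c - n, j)) then T y else 0)"
      unfolding y by (auto simp: tens_def bas_def)
  qed
  finally show ?thesis using T by (simp add: sum.delta') (simp add: supp_def)
qed

lemma tpow_Delta_y:
  assumes q: "not_root_of_unity q"
  shows "tpow q Delta_y m ((a, i), (c, j)) = (if a = 0 \<and> c = int i \<and> i + j = m then qbinom q i j else 0)"
proof (induction m arbitrary: i c j)
  case 0
  show ?case using q by (auto simp: tens_def bas_def)
next
  case (Suc m)
  have "tpow q Delta_y (Suc m) ((a, i), (c, j)) =
      (if 0 < i then tpow q Delta_y m ((a, i - 1), (c - 1, j)) * q ^ j else 0) +
      (if 0 < j then tpow q Delta_y m ((a, i), (c, j - 1)) else 0)"
    using finite_supp_tpow[of Delta_y q m] by (simp add: tmul_Delta_y supp_Delta_y)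
  also have "\<dots> = (if a = 0 \<and> c = int i \<and> i + j = Suc m then qbinom q i j else 0)"
    using q by (cases i; cases j) (auto simp: Suc.IH qbinom_Suc_Suc)
  finally show ?case .
qed

lemma finite_supp_Delta_bas: "finite (supp (Delta_bas q b))"
  by (cases b) (auto simp: Delta_bas_def supp_tens supp_Delta_y intro!: finite_supp_tmul finite_supp_tpow)

lemma Delta_bas_apply:
  assumes q: "not_root_of_unity q"
  shows "Delta_bas q (n, m) ((a, i), (c, j)) =
    (if a = n \<and> c = n + int i \<and> i + j = m then qbinom q i j else 0)"
proof -
  have "finite (supp (tpow q Delta_y m))"
    by (simp add: finite_supp_tpow supp_Delta_y)
  then show ?thesis
    by (auto simp: Delta_bas_def tmul_Delta_xpow_left tpow_Delta_y[OF q])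
qed

lemma Delta_eq_lcomb: "Delta q h P = lcomb h (\<lambda>b. Delta_bas q b P)"
  by (simp add: Delta_def lcomb_def)

lemma Delta_T2: "h \<in> Hc \<Longrightarrow> Delta q h \<in> T2"
  unfolding Delta_def T2_def Hc_def mem_Collect_eq
  by (rule finite_supp_sum) (simp_all add: finite_supp_Delta_bas)

lemma Aut_c_Hc: "\<phi> \<in> Aut_c q \<Longrightarrow> h \<in> Hc \<Longrightarrow> \<phi> h \<in> Hc"
  unfolding Aut_c_def by (auto simp: bij_betw_def)

lemma Aut_c_linear: "\<phi> \<in> Aut_c q \<Longrightarrow> linear_H \<phi>"
  unfolding Aut_c_def by auto

lemma Aut_c_Delta: "\<phi> \<in> Aut_c q \<Longrightarrow> h \<in> Hc \<Longrightarrow> Delta q (\<phi> h) = tmap \<phi> \<phi> (Delta q h)"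
  unfolding Aut_c_def by auto

lemma Aut_c_eps: "\<phi> \<in> Aut_c q \<Longrightarrow> h \<in> Hc \<Longrightarrow> eps (\<phi> h) = eps h"
  unfolding Aut_c_def by auto

lemma Aut_c_compose:
  assumes \<phi>: "\<phi> \<in> Aut_c q" and \<psi>: "\<psi> \<in> Aut_c q"
  shows "compose Hc \<phi> \<psi> \<in> Aut_c q"
proof -
  have "bij_betw (\<phi> \<circ> \<psi>) Hc Hc" using \<phi> \<psi> unfolding Aut_c_def by (auto intro: bij_betw_trans)
  then have bij: "bij_betw (compose Hc \<phi> \<psi>) Hc Hc"
    by (rule bij_betw_cong[THEN iffD1, rotated]) (simp add: compose_eq)
  have lin: "linear_H (compose Hc \<phi> \<psi>)"
    using Aut_c_linear[OF \<phi>] Aut_c_linear[OF \<psi>] Aut_c_Hc[OF \<psi>]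
    by (simp add: linear_H_def compose_eq hadd_Hc hscale_Hc)
  have "tmap (compose Hc \<phi> \<psi>) (compose Hc \<phi> \<psi>) = tmap (\<lambda>h. \<phi> (\<psi> h)) (\<lambda>h. \<phi> (\<psi> h))"
    by (rule tmap_cong) (simp_all add: compose_eq)
  moreover have "Delta q (\<phi> (\<psi> h)) = tmap (\<lambda>h. \<phi> (\<psi> h)) (\<lambda>h. \<phi> (\<psi> h)) (Delta q h)" if h: "h \<in> Hc" for h
    using Aut_c_Delta[OF \<phi> Aut_c_Hc[OF \<psi> h]] Aut_c_Delta[OF \<psi> h]
    by (simp add: tmap_tmap[OF Aut_c_linear[OF \<phi>] Aut_c_linear[OF \<phi>]] Aut_c_Hc[OF \<psi>] Delta_T2[OF h])
  ultimately show ?thesis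
    using bij lin Aut_c_eps[OF \<phi>] Aut_c_eps[OF \<psi>] Aut_c_Hc[OF \<psi>]
    by (auto simp: Aut_c_def compose_eq compose_extensional)
qed

lemma Aut_c_id: "(\<lambda>h\<in>Hc. h) \<in> Aut_c q"
proof -
  have "linear_H (\<lambda>h\<in>Hc. h)" by (auto simp: linear_H_def hadd_Hc hscale_Hc)
  moreover have "bij_betw (\<lambda>h\<in>Hc. h) Hc Hc"
    by (rule bij_betw_cong[THEN iffD1, OF _ bij_betw_id]) simp
  ultimately show ?thesis
    by (simp add: Aut_c_def tmap_id Delta_T2)
qed

lemma Aut_c_inv:
  assumes \<phi>: "\<phi> \<in> Aut_c q"
  defines "\<psi> \<equiv> \<lambda>h\<in>Hc. inv_into Hc \<phi> h"
  shows "\<psi> \<in> Aut_c q" and "compose Hc \<psi> \<phi> = (\<lambda>h\<in>Hc. h)"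
proof -
  have bij\<phi>: "bij_betw \<phi> Hc Hc" using \<phi> by (simp add: Aut_c_def)
  have bij: "bij_betw \<psi> Hc Hc"
    unfolding \<psi>_def by (rule bij_betw_cong[THEN iffD1, OF _ bij_betw_inv_into[OF bij\<phi>]]) simp
  then have \<psi>_Hc: "\<psi> h \<in> Hc" if "h \<in> Hc" for h using that by (auto simp: bij_betw_def)
  have \<phi>\<psi>: "\<phi> (\<psi> h) = h" if "h \<in> Hc" for h
    using that bij\<phi> unfolding \<psi>_def by (simp add: bij_betw_inv_into_right)
  have \<psi>\<phi>: "\<psi> (\<phi> h) = h" if "h \<in> Hc" for h
    using that bij\<phi> unfolding \<psi>_def by (auto simp: bij_betw_inv_into_left bij_betw_def)
  have lin: "linear_H \<psi>"
    using Aut_c_linear[OF \<phi>] \<psi>_Hc \<phi>\<psi> \<psi>\<phi> by (rule linear_H_inverse)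
  have Delta: "Delta q (\<psi> h) = tmap \<psi> \<psi> (Delta q h)" if h: "h \<in> Hc" for h
  proof -
    have "Delta q (\<psi> h) = tmap (\<lambda>h\<in>Hc. h) (\<lambda>h\<in>Hc. h) (Delta q (\<psi> h))"
      by (simp add: tmap_id Delta_T2 \<psi>_Hc h)
    also have "tmap (\<lambda>h\<in>Hc. h) (\<lambda>h\<in>Hc. h) = tmap (\<lambda>h. \<psi> (\<phi> h)) (\<lambda>h. \<psi> (\<phi> h))"
      by (rule tmap_cong) (simp_all add: \<psi>\<phi>)
    also have "\<dots> (Delta q (\<psi> h)) = tmap \<psi> \<psi> (tmap \<phi> \<phi> (Delta q (\<psi> h)))"
      by (rule tmap_tmap[OF lin lin, symmetric]) (simp_all add: Aut_c_Hc[OF \<phi>] Delta_T2 \<psi>_Hc h)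
    also have "tmap \<phi> \<phi> (Delta q (\<psi> h)) = Delta q h"
      using Aut_c_Delta[OF \<phi> \<psi>_Hc[OF h]] \<phi>\<psi>[OF h] by simp
    finally show ?thesis .
  qed
  have "eps (\<psi> h) = eps h" if h: "h \<in> Hc" for h
    using Aut_c_eps[OF \<phi> \<psi>_Hc[OF h]] \<phi>\<psi>[OF h] by simp
  then show "\<psi> \<in> Aut_c q"
    using bij lin Delta by (simp add: Aut_c_def \<psi>_def)
  show "compose Hc \<psi> \<phi> = (\<lambda>h\<in>Hc. h)"
    using \<psi>\<phi> by (auto simp: compose_def)
qed

lemma group_AutcGroup: "group (AutcGroup q)"
proof (rule groupI)
  fix x y z assume "x \<in> carrier (AutcGroup q)" "y \<in> carrier (AutcGroup q)" "z \<in> carrier (AutcGroup q)"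
  then have "z \<in> Hc \<rightarrow> Hc" by (simp add: AutcGroup_def Aut_c_Hc)
  then show "x \<otimes>\<^bsub>AutcGroup q\<^esub> y \<otimes>\<^bsub>AutcGroup q\<^esub> z = x \<otimes>\<^bsub>AutcGroup q\<^esub> (y \<otimes>\<^bsub>AutcGroup q\<^esub> z)"
    by (simp add: AutcGroup_def compose_assoc)
next
  fix x assume "x \<in> carrier (AutcGroup q)"
  then show "\<one>\<^bsub>AutcGroup q\<^esub> \<otimes>\<^bsub>AutcGroup q\<^esub> x = x"
    by (auto simp: AutcGroup_def compose_def Aut_c_def Aut_c_Hc extensional_def fun_eq_iff)
  show "\<exists>y\<in>carrier (AutcGroup q). y \<otimes>\<^bsub>AutcGroup q\<^esub> x = \<one>\<^bsub>AutcGroup q\<^esub>"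
    using \<open>x \<in> carrier (AutcGroup q)\<close> Aut_c_inv[of x q] by (auto simp: AutcGroup_def)
qed (simp_all add: AutcGroup_def Aut_c_compose Aut_c_id)

section \<open>The homomorphism \<open>f\<^sub>1\<close>\<close>

definition xdiff :: "int \<Rightarrow> 'a::field hq" where
  "xdiff n = hsub (bas (n + 1, 0)) (bas (n, 0))"

definition y_twist :: "int \<Rightarrow> 'a::field \<Rightarrow> 'a hq" where
  "y_twist n \<beta> = hadd (bas (n, 1)) (hscale \<beta> (xdiff n))"

lemma xdiff_Hc [simp]: "xdiff n \<in> Hc"
  by (simp add: xdiff_def hsub_Hc)

lemma y_twist_0 [simp]: "y_twist n 0 = bas (n, 1)"
  by (simp add: y_twist_def hadd_def hscale_def)

lemma y_twist_inj: "y_twist n \<beta> = y_twist n \<beta>' \<Longrightarrow> \<beta> = \<beta>'"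
  by (drule fun_cong[of _ _ "(n + 1, 0)"]) (simp add: y_twist_def hadd_def hscale_def xdiff_def hsub_def bas_def)

lemma f1_eqI:
  assumes "\<phi> (bas (n, 1)) = y_twist n \<beta>"
  shows "f1 \<phi> n = \<beta>"
proof -
  have "f1 \<phi> n = (THE \<beta>. \<phi> (bas (n, 1)) = y_twist n \<beta>)"
    by (simp add: f1_def y_twist_def xdiff_def)
  also have "\<dots> = \<beta>"
    by (rule the_equality) (use assms y_twist_inj in metis)+
  finally show ?thesis .
qed

lemma mem_Aut_star:
  "\<phi> \<in> Aut_star q \<longleftrightarrow>
    \<phi> \<in> Aut_c q \<and> (\<forall>n. \<phi> (bas (n, 0)) = bas (n, 0)) \<and> (\<forall>n. \<phi> (bas (n, 1)) = y_twist n (f1 \<phi> n))"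
proof -
  have "(\<exists>\<beta>. \<phi> (bas (n, 1)) = y_twist n \<beta>) \<longleftrightarrow> \<phi> (bas (n, 1)) = y_twist n (f1 \<phi> n)" for n
    using f1_eqI by metis
  moreover have "\<phi> \<in> Aut_star q \<longleftrightarrow>
      \<phi> \<in> Aut_c q \<and> (\<forall>n. \<phi> (bas (n, 0)) = bas (n, 0)) \<and> (\<forall>n. \<exists>\<beta>. \<phi> (bas (n, 1)) = y_twist n \<beta>)"
    by (simp add: Aut_star_def y_twist_def xdiff_def)
  ultimately show ?thesis by simp
qed

lemma Aut_star_y_twist:
  assumes \<phi>: "\<phi> \<in> Aut_star q"
  shows "\<phi> (y_twist n \<beta>) = y_twist n (f1 \<phi> n + \<beta>)"
proof -
  have lin: "linear_H \<phi>" using \<phi> mem_Aut_star Aut_c_linear by blast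
  have "\<phi> (y_twist n \<beta>) = hadd (\<phi> (bas (n, 1))) (hscale \<beta> (\<phi> (xdiff n)))"
    unfolding y_twist_def using linear_H_hadd[OF lin bas_Hc hscale_Hc[OF xdiff_Hc]] linear_H_hscale[OF lin xdiff_Hc]
    by simp
  also have "\<phi> (xdiff n) = xdiff n"
    using \<phi> by (simp add: xdiff_def linear_H_hsub[OF lin] mem_Aut_star)
  also have "\<phi> (bas (n, 1)) = y_twist n (f1 \<phi> n)"
    using \<phi> by (simp add: mem_Aut_star)
  finally show ?thesis
    by (simp add: y_twist_def hadd_def hscale_def fun_eq_iff algebra_simps)
qed

lemma compose_Aut_star:
  assumes "\<phi> \<in> Aut_star q" "\<psi> \<in> Aut_star q"
  shows "compose Hc \<phi> \<psi> \<in> Aut_star q" and "f1 (compose Hc \<phi> \<psi>) = (\<lambda>n. f1 \<phi> n + f1 \<psi> n)"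
proof -
  have "compose Hc \<phi> \<psi> (bas (n, 1)) = y_twist n (f1 \<phi> n + f1 \<psi> n)" for n
  proof -
    have "\<psi> (bas (n, 1)) = y_twist n (f1 \<psi> n)" using assms(2) mem_Aut_star by blast
    then show ?thesis by (simp add: compose_eq Aut_star_y_twist[OF assms(1)])
  qed
  then show "f1 (compose Hc \<phi> \<psi>) = (\<lambda>n. f1 \<phi> n + f1 \<psi> n)"
    by (simp add: fun_eq_iff f1_eqI)
  with \<open>compose Hc \<phi> \<psi> (bas (_, 1)) = _\<close> show "compose Hc \<phi> \<psi> \<in> Aut_star q"
    using assms by (simp add: mem_Aut_star Aut_c_compose compose_eq)
qed

lemma left_inverse_Aut_star:
  assumes \<phi>: "\<phi> \<in> Aut_star q" and \<psi>: "\<psi> \<in> Aut_c q" and \<psi>\<phi>: "\<And>h. h \<in> Hc \<Longrightarrow> \<psi> (\<phi> h) = h"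
  shows "\<psi> \<in> Aut_star q"
proof -
  have "\<psi> (bas (n, 0)) = bas (n, 0)" for n
    using \<psi>\<phi>[of "bas (n, 0)"] \<phi> by (simp add: mem_Aut_star)
  moreover have "\<psi> (bas (n, 1)) = y_twist n (- f1 \<phi> n)" for n
  proof -
    have "\<phi> (y_twist n (- f1 \<phi> n)) = bas (n, 1)"
      by (simp add: Aut_star_y_twist[OF \<phi>])
    then show ?thesis
      using \<psi>\<phi>[of "y_twist n (- f1 \<phi> n)"] by (simp add: y_twist_def hadd_Hc hscale_Hc)
  qed
  moreover from this have "f1 \<psi> n = - f1 \<phi> n" for n
    by (rule f1_eqI)
  ultimately show ?thesis
    using \<psi> by (simp add: mem_Aut_star)
qed

lemma subgroup_Aut_star:
  fixes q :: "'a::field"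
  shows "subgroup (Aut_star q) (AutcGroup q)"
proof (rule group.subgroupI[OF group_AutcGroup])
  show "Aut_star q \<subseteq> carrier (AutcGroup q)"
    by (auto simp: Aut_star_def AutcGroup_def)
  have id1: "(\<lambda>h\<in>Hc. h) (bas (n, 1)) = (y_twist n (f1 (\<lambda>h\<in>Hc. h) n) :: 'a hq)" for n
  proof -
    have "f1 (\<lambda>h\<in>Hc. h) n = (0 :: 'a)" by (rule f1_eqI) simp
    then show ?thesis by simp
  qed
  have "(\<lambda>h\<in>Hc. h) \<in> Aut_star q"
    unfolding mem_Aut_star by (intro conjI allI Aut_c_id id1) simp
  then show "Aut_star q \<noteq> {}" by blast
next
  fix \<phi> \<psi> assume "\<phi> \<in> Aut_star q" "\<psi> \<in> Aut_star q"
  then show "\<phi> \<otimes>\<^bsub>AutcGroup q\<^esub> \<psi> \<in> Aut_star q"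
    by (simp add: AutcGroup_def compose_Aut_star)
next
  fix \<phi> assume \<phi>: "\<phi> \<in> Aut_star q"
  interpret G: group "AutcGroup q" by (rule group_AutcGroup)
  have \<phi>_carrier: "\<phi> \<in> carrier (AutcGroup q)"
    using \<phi> by (simp add: Aut_star_def AutcGroup_def)
  have "compose Hc (inv\<^bsub>AutcGroup q\<^esub> \<phi>) \<phi> = (\<lambda>h\<in>Hc. h)"
    using G.l_inv[OF \<phi>_carrier] by (simp add: AutcGroup_def)
  then have "(inv\<^bsub>AutcGroup q\<^esub> \<phi>) (\<phi> h) = h" if "h \<in> Hc" for h
    using fun_cong[of _ _ h] that by (metis compose_eq restrict_apply')
  moreover have "inv\<^bsub>AutcGroup q\<^esub> \<phi> \<in> Aut_c q"
    using G.inv_closed[OF \<phi>_carrier] by (simp add: AutcGroup_def)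
  ultimately show "inv\<^bsub>AutcGroup q\<^esub> \<phi> \<in> Aut_star q"
    by (intro left_inverse_Aut_star[OF \<phi>])
qed

lemma f1_hom: "f1 \<in> hom ((AutcGroup q)\<lparr>carrier := Aut_star q\<rparr>) SeqGroup"
  by (rule homI) (simp_all add: AutcGroup_def SeqGroup_def compose_Aut_star)

lemma kernel_f1: "kernel ((AutcGroup q)\<lparr>carrier := Aut_star q\<rparr>) SeqGroup f1 = Aut_1 q"
proof (intro equalityI subsetI)
  fix \<phi> assume "\<phi> \<in> kernel ((AutcGroup q)\<lparr>carrier := Aut_star q\<rparr>) SeqGroup f1"
  then have \<phi>: "\<phi> \<in> Aut_star q" and f1: "f1 \<phi> = (\<lambda>n. 0)"
    by (auto simp: kernel_def SeqGroup_def)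
  then have lin: "linear_H \<phi>" using mem_Aut_star Aut_c_linear by blast
  have fix01: "\<phi> (bas (n, m)) = bas (n, m)" if "m < 2" for n m
    using \<phi> f1 that by (auto simp: mem_Aut_star less_2_cases_iff)
  have "\<phi> h = h" if h: "h \<in> H01" for h
  proof (rule linear_H_fixes)
    show "linear_H \<phi>" "h \<in> Hc" using lin h by (simp_all add: H01_def)
    fix b assume "b \<in> supp h"
    then show "\<phi> (bas b) = bas b"
      using h fix01 by (cases b) (auto simp: H01_def supp_def not_less[symmetric])
  qed
  then show "\<phi> \<in> Aut_1 q"
    using \<phi> by (simp add: Aut_1_def mem_Aut_star)
next
  fix \<phi> assume \<phi>: "\<phi> \<in> Aut_1 q"
  have H01_bas: "bas (n, m) \<in> H01" if "m < 2" for n m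
    using that by (simp add: H01_def) (simp add: bas_def)
  have fix01: "\<phi> (bas (n, m)) = bas (n, m)" if "m < 2" for n m
    using \<phi> H01_bas[OF that, of n] unfolding Aut_1_def by blast
  then have "f1 \<phi> = (\<lambda>n. 0)"
    by (intro ext f1_eqI) simp
  with fix01 show "\<phi> \<in> kernel ((AutcGroup q)\<lparr>carrier := Aut_star q\<rparr>) SeqGroup f1"
    using \<phi> by (simp add: kernel_def SeqGroup_def Aut_1_def mem_Aut_star)
qed

section \<open>Automorphisms from triangular matrices\<close>

definition upper_tri :: "(int \<Rightarrow> int \<Rightarrow> 'a::field) \<Rightarrow> bool" where
  "upper_tri X \<longleftrightarrow> (\<forall>s e. e < s \<longrightarrow> X s e = 0)"

definition tri_inv :: "(int \<Rightarrow> int \<Rightarrow> 'a::field) \<Rightarrow> (int \<Rightarrow> int \<Rightarrow> 'a) \<Rightarrow> bool" where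
  "tri_inv X Y \<longleftrightarrow> (\<forall>s e. s \<le> e \<longrightarrow> (\<Sum>t\<in>{s..e}. X s t * Y t e) = (if s = e then 1 else 0))"

text \<open>The factor \<open>[m]\<^sub>q! / [j]\<^sub>q!\<close> transports the interval map \<open>[n, n + m] \<mapsto> \<Sum> X n c * Y d (n + m) * [c, d]\<close>
  from the divided powers back to the basis \<open>x\<^sup>c y\<^sup>j\<close>, where \<open>j = d - c\<close>.\<close>

definition aut_coeff :: "'a::field \<Rightarrow> (int \<Rightarrow> int \<Rightarrow> 'a) \<Rightarrow> (int \<Rightarrow> int \<Rightarrow> 'a) \<Rightarrow> idx \<Rightarrow> idx \<Rightarrow> 'a" where
  "aut_coeff q X Y b p =
    qfact q (snd b) / qfact q (snd p) * X (fst b) (fst p) * Y (fst p + int (snd p)) (fst b + int (snd b))"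

definition aut_map :: "'a::field \<Rightarrow> (int \<Rightarrow> int \<Rightarrow> 'a) \<Rightarrow> (int \<Rightarrow> int \<Rightarrow> 'a) \<Rightarrow> 'a hq \<Rightarrow> 'a hq" where
  "aut_map q X Y = (\<lambda>h\<in>Hc. \<lambda>p. lcomb h (\<lambda>b. aut_coeff q X Y b p))"

lemma upper_triD: "upper_tri X \<Longrightarrow> X s e \<noteq> 0 \<Longrightarrow> s \<le> e"
  unfolding upper_tri_def by (meson not_le)

lemma tri_inv_sum:
  assumes X: "upper_tri X" and Y: "upper_tri Y" and XY: "tri_inv X Y" and "lo \<le> s" "e \<le> hi"
  shows "(\<Sum>t\<in>{lo..hi}. X s t * Y t e) = (if s = e then 1 else 0)"
proof (cases "s \<le> e")
  case True
  have "(\<Sum>t\<in>{lo..hi}. X s t * Y t e) = (\<Sum>t\<in>{s..e}. X s t * Y t e)"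
    by (rule sum.mono_neutral_right) (use assms upper_triD[OF X] upper_triD[OF Y] in fastforce)+
  then show ?thesis using XY True by (simp add: tri_inv_def)
next
  case False
  then have "X s t * Y t e = 0" for t
    using upper_triD[OF X, of s t] upper_triD[OF Y, of t e] by fastforce
  then have "(\<Sum>t\<in>{lo..hi}. X s t * Y t e) = 0"
    by (metis (no_types) sum.neutral)
  then show ?thesis using False by simp
qed

lemma tri_inv_sum_shift:
  assumes "upper_tri X" "upper_tri Y" "tri_inv X Y" "lo \<le> s" "e \<le> lo + int m"
  shows "(\<Sum>j\<in>{0..m}. X s (lo + int j) * Y (lo + int j) e) = (if s = e then 1 else 0)"
proof -
  have "(\<Sum>j\<in>{0..m}. X s (lo + int j) * Y (lo + int j) e) = (\<Sum>t\<in>{lo..lo + int m}. X s t * Y t e)"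
    by (rule sum.reindex_bij_witness[where i = "\<lambda>t. nat (t - lo)" and j = "\<lambda>j. lo + int j"]) auto
  with tri_inv_sum[OF assms] show ?thesis by simp
qed

lemma supp_aut_coeff:
  assumes "upper_tri X" "upper_tri Y"
  shows "supp (aut_coeff q X Y (n, m)) \<subseteq> {n..n + int m} \<times> {0..m}"
proof
  fix p assume "p \<in> supp (aut_coeff q X Y (n, m))"
  then have "X n (fst p) \<noteq> 0" "Y (fst p + int (snd p)) (n + int m) \<noteq> 0"
    by (auto simp: supp_def aut_coeff_def)
  then show "p \<in> {n..n + int m} \<times> {0..m}"
    using upper_triD[OF assms(1)] upper_triD[OF assms(2)] by (cases p) fastforce
qed

lemma aut_coeff_Hc: "upper_tri X \<Longrightarrow> upper_tri Y \<Longrightarrow> aut_coeff q X Y b \<in> Hc"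
  using supp_aut_coeff[of X Y q "fst b" "snd b"] by (auto simp: Hc_def intro: finite_subset)

lemma lcomb_aut_coeff:
  assumes "upper_tri X" "upper_tri Y"
  shows "lcomb (aut_coeff q X Y (n, m)) c = (\<Sum>e\<in>{n..n + int m}. \<Sum>j\<in>{0..m}. aut_coeff q X Y (n, m) (e, j) * c (e, j))"
  by (simp add: lcomb_superset[OF _ supp_aut_coeff[OF assms]] sum.cartesian_product)

lemma aut_map_apply: "h \<in> Hc \<Longrightarrow> aut_map q X Y h p = lcomb h (\<lambda>b. aut_coeff q X Y b p)"
  by (simp add: aut_map_def)

lemma lcomb_bas [simp]: "lcomb (bas b) c = c b"
  unfolding lcomb_def supp_bas by (simp add: bas_def)

lemma aut_map_bas: "aut_map q X Y (bas b) = aut_coeff q X Y b"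
  by (simp add: aut_map_def)

lemma aut_map_Hc:
  assumes "upper_tri X" "upper_tri Y" "h \<in> Hc"
  shows "aut_map q X Y h \<in> Hc"
  using assms aut_coeff_Hc[OF assms(1,2)] finite_supp_sum[of "supp h" "aut_coeff q X Y" h]
  by (simp add: aut_map_def lcomb_def Hc_def)

lemma linear_aut_map: "linear_H (aut_map q X Y)"
  unfolding linear_H_def
proof (intro conjI ballI allI)
  fix u v :: "'a hq" assume u: "u \<in> Hc" and v: "v \<in> Hc"
  then have "finite (supp u)" "finite (supp v)" by (simp_all add: Hc_def)
  with u v show "aut_map q X Y (hadd u v) = hadd (aut_map q X Y u) (aut_map q X Y v)"
    by (simp add: fun_eq_iff aut_map_apply hadd_Hc lcomb_hadd) (simp add: hadd_def aut_map_apply)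
next
  fix s :: 'a and u :: "'a hq" assume u: "u \<in> Hc"
  then have "finite (supp u)" by (simp add: Hc_def)
  with u show "aut_map q X Y (hscale s u) = hscale s (aut_map q X Y u)"
    by (simp add: fun_eq_iff aut_map_apply hscale_Hc lcomb_hscale) (simp add: hscale_def aut_map_apply)
qed

lemma aut_map_aut_coeff:
  assumes q: "not_root_of_unity q" and X: "upper_tri X" and Y: "upper_tri Y" and YX: "tri_inv Y X"
  shows "aut_map q X Y (aut_coeff q Y X (n, m)) (d, k) = (if (n, m) = (d, k) then 1 else 0)"
proof -
  let ?c = "qfact q m / qfact q k"
  have "aut_map q X Y (aut_coeff q Y X (n, m)) (d, k) =
      (\<Sum>e\<in>{n..n + int m}. \<Sum>j\<in>{0..m}. aut_coeff q Y X (n, m) (e, j) * aut_coeff q X Y (e, j) (d, k))"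
    by (simp add: aut_map_apply aut_coeff_Hc[OF Y X] lcomb_aut_coeff[OF Y X])
  also have "\<dots> = (\<Sum>e\<in>{n..n + int m}. ?c * (Y n e * X e d) *
      (\<Sum>j\<in>{0..m}. Y (d + int k) (e + int j) * X (e + int j) (n + int m)))"
  proof -
    have "qfact q m / qfact q j * A * B * (qfact q j / qfact q k * C * D) = ?c * (A * C) * (D * B)"
      for j A B C D
      using qfact_nonzero[OF q, of j] by (simp add: field_simps)
    then show ?thesis by (simp only: aut_coeff_def fst_conv snd_conv sum_distrib_left)
  qed
  also have "\<dots> = (\<Sum>e\<in>{n..n + int m}. ?c * (Y n e * X e d) * (if d + int k = n + int m then 1 else 0))"
  proof (intro sum.cong refl)
    fix e assume e: "e \<in> {n..n + int m}"
    show "?c * (Y n e * X e d) * (\<Sum>j\<in>{0..m}. Y (d + int k) (e + int j) * X (e + int j) (n + int m)) =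
        ?c * (Y n e * X e d) * (if d + int k = n + int m then 1 else 0)"
    proof (cases "X e d = 0")
      case False
      then have "e \<le> d" using upper_triD[OF X] by blast
      then show ?thesis using e by (simp add: tri_inv_sum_shift[OF Y X YX])
    qed simp
  qed
  also have "\<dots> = (if (n, m) = (d, k) then 1 else 0)"
  proof (cases "d + int k = n + int m")
    case True
    then have "(\<Sum>e\<in>{n..n + int m}. ?c * (Y n e * X e d) * (if d + int k = n + int m then 1 else 0)) =
        ?c * (\<Sum>e\<in>{n..n + int m}. Y n e * X e d)"
      by (simp add: sum_distrib_left)
    also have "(\<Sum>e\<in>{n..n + int m}. Y n e * X e d) = (if n = d then 1 else 0)"
      using True by (intro tri_inv_sum[OF Y X YX]) auto
    finally show ?thesis
      using True qfact_nonzero[OF q, of m] by auto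
  qed simp
  finally show ?thesis .
qed

lemma aut_map_inverse:
  assumes q: "not_root_of_unity q" and X: "upper_tri X" and Y: "upper_tri Y" and YX: "tri_inv Y X"
    and h: "h \<in> Hc"
  shows "aut_map q X Y (aut_map q Y X h) = h"
proof
  fix p
  have YX_h: "aut_map q Y X h = (\<lambda>p. \<Sum>b\<in>supp h. h b * aut_coeff q Y X b p)"
    using h by (simp add: aut_map_apply lcomb_def fun_eq_iff)
  have "aut_map q X Y (aut_map q Y X h) p = (\<Sum>b\<in>supp h. h b * aut_map q X Y (aut_coeff q Y X b) p)"
    unfolding YX_h using h
    by (intro linear_H_sum[OF linear_aut_map]) (simp_all add: aut_coeff_Hc[OF Y X] finite_supp_Hc)
  also have "aut_map q X Y (aut_coeff q Y X b) p = (if b = p then 1 else 0)" for b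
    using aut_map_aut_coeff[OF q X Y YX, of "fst b" "snd b" "fst p" "snd p"] by simp
  then have "(\<Sum>b\<in>supp h. h b * aut_map q X Y (aut_coeff q Y X b) p) = lcomb h (\<lambda>b. if b = p then 1 else 0)"
    by (simp add: lcomb_def)
  finally show "aut_map q X Y (aut_map q Y X h) p = h p"
    using h by (simp add: lcomb_delta Hc_def)
qed

lemma supp_Delta_bas:
  assumes q: "not_root_of_unity q"
  shows "supp (Delta_bas q (n, m)) \<subseteq> (\<lambda>l. ((n, l), (n + int l, m - l))) ` {0..m}"
proof
  fix p assume "p \<in> supp (Delta_bas q (n, m))"
  then show "p \<in> (\<lambda>l. ((n, l), (n + int l, m - l))) ` {0..m}"
    by (cases p) (auto simp: supp_def Delta_bas_apply[OF q] split: if_splits)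
qed

lemma Delta_aut_coeff:
  assumes q: "not_root_of_unity q" and X: "upper_tri X" and Y: "upper_tri Y" and YX: "tri_inv Y X"
  shows "Delta q (aut_coeff q X Y (n, m)) ((a, i), (e, j)) =
    tmap (aut_map q X Y) (aut_map q X Y) (Delta_bas q (n, m)) ((a, i), (e, j))"
proof -
  define C where "C = qfact q m / (qfact q i * qfact q j) * X n a * Y (e + int j) (n + int m)"
  have "Delta q (aut_coeff q X Y (n, m)) ((a, i), (e, j)) =
      lcomb (aut_coeff q X Y (n, m)) (\<lambda>b. if b = (a, i + j) then if e = a + int i then qbinom q i j else 0 else 0)"
    unfolding Delta_eq_lcomb by (rule arg_cong[where f = "lcomb _"]) (auto simp: fun_eq_iff Delta_bas_apply[OF q])
  also have "\<dots> = (if e = a + int i then C else 0)"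
    using finite_supp_Hc[OF aut_coeff_Hc[OF X Y]] qfact_nonzero[OF q]
    by (simp add: lcomb_delta aut_coeff_def qbinom_def C_def add.assoc)
  finally have lhs: "Delta q (aut_coeff q X Y (n, m)) ((a, i), (e, j)) = (if e = a + int i then C else 0)" .
  let ?l = "\<lambda>l. ((n, l), (n + int l, m - l))"
  have "tmap (aut_map q X Y) (aut_map q X Y) (Delta_bas q (n, m)) ((a, i), (e, j)) =
      (\<Sum>l\<in>{0..m}. qbinom q l (m - l) * aut_coeff q X Y (n, l) (a, i) * aut_coeff q X Y (n + int l, m - l) (e, j))"
    unfolding tmap_eq_lcomb
    by (subst lcomb_superset[OF _ supp_Delta_bas[OF q]])
      (simp_all add: sum.reindex inj_on_def aut_map_bas Delta_bas_apply[OF q] mult.assoc)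
  also have "\<dots> = (\<Sum>l\<in>{0..m}. C * (Y (a + int i) (n + int l) * X (n + int l) e))"
  proof (intro sum.cong refl)
    fix l assume "l \<in> {0..m}"
    then have "qfact q (l + (m - l)) = qfact q m" "n + int l + int (m - l) = n + int m" by auto
    then show "qbinom q l (m - l) * aut_coeff q X Y (n, l) (a, i) * aut_coeff q X Y (n + int l, m - l) (e, j) =
        C * (Y (a + int i) (n + int l) * X (n + int l) e)"
      using qfact_nonzero[OF q, of l] qfact_nonzero[OF q, of "m - l"]
      by (simp add: qbinom_def aut_coeff_def C_def field_simps)
  qed
  also have "\<dots> = (if e = a + int i then C else 0)"
  proof (cases "C = 0")
    case False
    then have "n \<le> a" "e + int j \<le> n + int m"
      using upper_triD[OF X] upper_triD[OF Y] by (auto simp: C_def)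
    then show ?thesis
      by (simp add: sum_distrib_left[symmetric] tri_inv_sum_shift[OF Y X YX])
  qed simp
  finally show ?thesis using lhs by simp
qed

lemma aut_map_eq_sum:
  "h \<in> Hc \<Longrightarrow> aut_map q X Y h = (\<lambda>p. \<Sum>b\<in>supp h. h b * aut_coeff q X Y b p)"
  by (simp add: aut_map_apply lcomb_def fun_eq_iff)

lemma Delta_aut_map:
  assumes q: "not_root_of_unity q" and X: "upper_tri X" and Y: "upper_tri Y" and YX: "tri_inv Y X"
    and h: "h \<in> Hc"
  shows "Delta q (aut_map q X Y h) = tmap (aut_map q X Y) (aut_map q X Y) (Delta q h)"
proof
  fix P :: "idx \<times> idx"
  have fin: "finite (supp h)" "finite (supp (aut_coeff q X Y b))" for b
    using h aut_coeff_Hc[OF X Y] by (simp_all add: finite_supp_Hc)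
  have "Delta q (aut_map q X Y h) P = (\<Sum>b\<in>supp h. h b * Delta q (aut_coeff q X Y b) P)"
    by (simp add: aut_map_eq_sum[OF h] Delta_eq_lcomb lcomb_sum fin)
  also have "\<dots> = (\<Sum>b\<in>supp h. h b * tmap (aut_map q X Y) (aut_map q X Y) (Delta_bas q b) P)"
    by (intro sum.cong refl) (metis Delta_aut_coeff[OF q X Y YX] prod.collapse)
  also have "\<dots> = tmap (aut_map q X Y) (aut_map q X Y) (Delta q h) P"
    by (simp add: Delta_def tmap_sum fin finite_supp_Delta_bas T2_def)
  finally show "Delta q (aut_map q X Y h) P = tmap (aut_map q X Y) (aut_map q X Y) (Delta q h) P" .
qed

lemma eps_eq_lcomb:
  assumes "finite (supp h)"
  shows "eps h = lcomb h (\<lambda>b. if snd b = 0 then 1 else 0)"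
proof -
  have "eps h = (\<Sum>b\<in>{b\<in>supp h. snd b = 0}. h b)"
    unfolding eps_def
    by (rule sum.reindex_bij_witness[where i = fst and j = "\<lambda>n. (n, 0)"]) (auto simp: supp_def)
  also have "\<dots> = lcomb h (\<lambda>b. if snd b = 0 then 1 else 0)"
    using assms by (simp add: lcomb_def sum.inter_filter if_distrib cong: if_cong)
  finally show ?thesis .
qed

lemma eps_aut_coeff:
  assumes X: "upper_tri X" and Y: "upper_tri Y" and XY: "tri_inv X Y"
  shows "eps (aut_coeff q X Y (n, m)) = (if m = 0 then 1 else 0)"
proof -
  have "eps (aut_coeff q X Y (n, m)) = (\<Sum>t\<in>{n..n + int m}. qfact q m * (X n t * Y t (n + int m)))"
    using finite_supp_Hc[OF aut_coeff_Hc[OF X Y]]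
    by (simp add: eps_eq_lcomb lcomb_aut_coeff[OF X Y] if_distrib sum.delta aut_coeff_def mult.assoc cong: if_cong)
  also have "\<dots> = qfact q m * (if n = n + int m then 1 else 0)"
    by (simp add: sum_distrib_left[symmetric] tri_inv_sum[OF X Y XY])
  finally show ?thesis by simp
qed

lemma eps_aut_map:
  assumes X: "upper_tri X" and Y: "upper_tri Y" and XY: "tri_inv X Y" and h: "h \<in> Hc"
  shows "eps (aut_map q X Y h) = eps h"
proof -
  have fin: "finite (supp h)" "finite (supp (aut_coeff q X Y b))" for b
    using h aut_coeff_Hc[OF X Y] by (simp_all add: finite_supp_Hc)
  have "eps (aut_map q X Y h) = (\<Sum>b\<in>supp h. h b * eps (aut_coeff q X Y b))"
    by (simp add: aut_map_eq_sum[OF h] eps_eq_lcomb lcomb_sum fin finite_supp_sum)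
  also have "\<dots> = lcomb h (\<lambda>b. if snd b = 0 then 1 else 0)"
    unfolding lcomb_def by (intro sum.cong refl) (metis eps_aut_coeff[OF X Y XY] prod.collapse snd_conv)
  finally show ?thesis by (simp add: eps_eq_lcomb fin)
qed

lemma aut_map_Aut_c:
  assumes q: "not_root_of_unity q" and X: "upper_tri X" and Y: "upper_tri Y"
    and XY: "tri_inv X Y" and YX: "tri_inv Y X"
  shows "aut_map q X Y \<in> Aut_c q"
proof -
  have "bij_betw (aut_map q X Y) Hc Hc"
    by (rule bij_betw_byWitness[where f' = "aut_map q Y X"])
      (auto simp: aut_map_inverse q X Y XY YX aut_map_Hc)
  then show ?thesis
    using linear_aut_map Delta_aut_map[OF q X Y YX] eps_aut_map[OF X Y XY]
    by (simp add: Aut_c_def aut_map_def)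
qed

section \<open>Surjectivity of \<open>f\<^sub>1\<close>\<close>

definition bidiag :: "(int \<Rightarrow> 'a::field) \<Rightarrow> int \<Rightarrow> int \<Rightarrow> 'a" where
  "bidiag \<beta> s e = (if e = s then 1 else 0) - (if e = s + 1 then \<beta> s else 0)"

definition bidiag_inv :: "(int \<Rightarrow> 'a::field) \<Rightarrow> int \<Rightarrow> int \<Rightarrow> 'a" where
  "bidiag_inv \<beta> s e = (if s \<le> e then \<Prod>k\<in>{s..<e}. \<beta> k else 0)"

lemma upper_tri_bidiag: "upper_tri (bidiag \<beta>)"
  by (simp add: upper_tri_def bidiag_def)

lemma upper_tri_bidiag_inv: "upper_tri (bidiag_inv \<beta>)"
  by (simp add: upper_tri_def bidiag_inv_def)

lemma bidiag_inv_diag [simp]: "bidiag_inv \<beta> s s = 1"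
  by (simp add: bidiag_inv_def)

lemma bidiag_inv_left:
  assumes "s < e" shows "bidiag_inv \<beta> s e = \<beta> s * bidiag_inv \<beta> (s + 1) e"
proof -
  have "{s..<e} = insert s {s + 1..<e}" using assms by auto
  with assms show ?thesis by (simp add: bidiag_inv_def)
qed

lemma bidiag_inv_right:
  assumes "s < e" shows "bidiag_inv \<beta> s e = bidiag_inv \<beta> s (e - 1) * \<beta> (e - 1)"
proof -
  have "{s..<e} = insert (e - 1) {s..<e - 1}" using assms by auto
  with assms show ?thesis by (simp add: bidiag_inv_def mult.commute)
qed

lemma tri_inv_bidiag_inv_bidiag: "tri_inv (bidiag_inv \<beta>) (bidiag \<beta>)"
  unfolding tri_inv_def
proof (intro allI impI)
  fix s e :: int assume "s \<le> e"
  have "(\<Sum>t\<in>{s..e}. bidiag_inv \<beta> s t * bidiag \<beta> t e) =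
      (\<Sum>t\<in>{s..e}. (if t = e then bidiag_inv \<beta> s t else 0) - (if t = e - 1 then bidiag_inv \<beta> s t * \<beta> t else 0))"
    by (rule sum.cong) (auto simp: bidiag_def)
  also have "\<dots> = bidiag_inv \<beta> s e - (if s \<le> e - 1 then bidiag_inv \<beta> s (e - 1) * \<beta> (e - 1) else 0)"
    using \<open>s \<le> e\<close> by (simp add: sum_subtractf)
  finally have "(\<Sum>t\<in>{s..e}. bidiag_inv \<beta> s t * bidiag \<beta> t e) =
      bidiag_inv \<beta> s e - (if s \<le> e - 1 then bidiag_inv \<beta> s (e - 1) * \<beta> (e - 1) else 0)" .
  then show "(\<Sum>t\<in>{s..e}. bidiag_inv \<beta> s t * bidiag \<beta> t e) = (if s = e then 1 else 0)"
    using \<open>s \<le> e\<close> bidiag_inv_right[of s e \<beta>] by auto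
qed

lemma tri_inv_bidiag_bidiag_inv: "tri_inv (bidiag \<beta>) (bidiag_inv \<beta>)"
  unfolding tri_inv_def
proof (intro allI impI)
  fix s e :: int assume "s \<le> e"
  have "(\<Sum>t\<in>{s..e}. bidiag \<beta> s t * bidiag_inv \<beta> t e) =
      (\<Sum>t\<in>{s..e}. (if t = s then bidiag_inv \<beta> t e else 0) - (if t = s + 1 then \<beta> s * bidiag_inv \<beta> t e else 0))"
    by (rule sum.cong) (auto simp: bidiag_def)
  also have "\<dots> = bidiag_inv \<beta> s e - (if s + 1 \<le> e then \<beta> s * bidiag_inv \<beta> (s + 1) e else 0)"
    using \<open>s \<le> e\<close> by (simp add: sum_subtractf)
  finally have "(\<Sum>t\<in>{s..e}. bidiag \<beta> s t * bidiag_inv \<beta> t e) =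
      bidiag_inv \<beta> s e - (if s + 1 \<le> e then \<beta> s * bidiag_inv \<beta> (s + 1) e else 0)" .
  then show "(\<Sum>t\<in>{s..e}. bidiag \<beta> s t * bidiag_inv \<beta> t e) = (if s = e then 1 else 0)"
    using \<open>s \<le> e\<close> bidiag_inv_left[of s e \<beta>] by auto
qed

lemma bidiag_inv_succ [simp]: "bidiag_inv \<beta> s (s + 1) = \<beta> s"
  by (simp add: bidiag_inv_left)

lemma aut_coeff_bidiag_0: "aut_coeff q (bidiag_inv \<beta>) (bidiag \<beta>) (n, 0) = bas (n, 0)"
proof
  fix p :: idx
  show "aut_coeff q (bidiag_inv \<beta>) (bidiag \<beta>) (n, 0) p = bas (n, 0) p"
    by (cases p) (auto simp: aut_coeff_def bidiag_inv_def bidiag_def bas_def)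
qed

lemma aut_coeff_bidiag_1: "aut_coeff q (bidiag_inv \<beta>) (bidiag \<beta>) (n, 1) = y_twist n (\<beta> n)"
proof
  fix p :: idx
  obtain c j where p: "p = (c, j)" by (cases p)
  have "aut_coeff q (bidiag_inv \<beta>) (bidiag \<beta>) (n, 1) (c, j) = y_twist n (\<beta> n) (c, j)"
  proof (cases "n \<le> c \<and> (c + int j = n \<or> c + int j = n + 1)")
    case True
    then consider "c = n" "j = 0" | "c = n" "j = 1" | "c = n + 1" "j = 0" by linarith
    then show ?thesis
      by cases (simp_all add: aut_coeff_def bidiag_def y_twist_def xdiff_def hadd_def hscale_def hsub_def bas_def)
  next
    case False
    then have "bidiag_inv \<beta> n c * bidiag \<beta> (c + int j) (n + 1) = 0"
      by (auto simp: bidiag_inv_def bidiag_def)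
    moreover have "y_twist n (\<beta> n) (c, j) = 0"
      using False by (auto simp: y_twist_def xdiff_def hadd_def hscale_def hsub_def bas_def)
    ultimately show ?thesis by (simp add: aut_coeff_def mult.assoc)
  qed
  then show "aut_coeff q (bidiag_inv \<beta>) (bidiag \<beta>) (n, 1) p = y_twist n (\<beta> n) p"
    by (simp add: p)
qed

lemma f1_surj:
  assumes q: "not_root_of_unity q"
  shows "\<exists>\<phi>\<in>Aut_star q. f1 \<phi> = \<beta>"
proof -
  define \<phi> where "\<phi> = aut_map q (bidiag_inv \<beta>) (bidiag \<beta>)"
  have \<phi>: "\<phi> \<in> Aut_c q"
    unfolding \<phi>_def using q upper_tri_bidiag_inv upper_tri_bidiag tri_inv_bidiag_inv_bidiag tri_inv_bidiag_bidiag_inv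
    by (rule aut_map_Aut_c)
  have \<phi>0: "\<phi> (bas (n, 0)) = bas (n, 0)" and \<phi>1: "\<phi> (bas (n, 1)) = y_twist n (\<beta> n)" for n
    unfolding \<phi>_def aut_map_bas aut_coeff_bidiag_0 aut_coeff_bidiag_1 by (rule refl)+
  have "f1 \<phi> = \<beta>"
    by (intro ext f1_eqI \<phi>1)
  moreover have "\<phi> \<in> Aut_star q"
    unfolding mem_Aut_star using \<phi> \<phi>0 \<phi>1 \<open>f1 \<phi> = \<beta>\<close> by simp
  ultimately show ?thesis by blast
qed

theorem proposition3p4:
  fixes q :: "'a::field"
  assumes "q \<noteq> 0"
    and "\<forall>n::nat. n > 0 \<longrightarrow> q ^ n \<noteq> 1"
  shows "group (AutcGroup q) \<and> subgroup (Aut_star q) (AutcGroup q)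
    \<and> f1 \<in> epi ((AutcGroup q)\<lparr>carrier := Aut_star q\<rparr>) SeqGroup
    \<and> kernel ((AutcGroup q)\<lparr>carrier := Aut_star q\<rparr>) SeqGroup f1 = Aut_1 q"
proof -
  have "not_root_of_unity q"
    using assms(2) by (simp add: not_root_of_unity_def)
  then have "f1 ` Aut_star q = UNIV"
    using f1_surj by (metis UNIV_eq_I image_iff)
  then have "f1 \<in> epi ((AutcGroup q)\<lparr>carrier := Aut_star q\<rparr>) SeqGroup"
    using f1_hom by (simp add: epi_def SeqGroup_def)
  then show ?thesis
    using group_AutcGroup subgroup_Aut_star kernel_f1 by blast
qed

end
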